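(* Let $G$ be a graph, $k \ge \gamma(G)$ an integer, and let $A$ and $B$ be dominating sets of $G$ with $|A| = |B| = k$. Then $A$ and $B$ are joined by a path in $D_{k+1}(G)$ if and only if $A$ and $B$ are joined by a path in $X_k(G)$.
   Context: All graphs are finite and simple. A set $S \subseteq V(G)$ is a dominating set of $G$ if every vertex of $V(G)\setminus S$ is adjacent to a vertex of $S$. $\gamma(G)$ is the minimum cardinality of a dominating set of $G$. For an integer $k \ge \gamma(G)$, the $k$-dominating graph $D_k(G)$ is the graph whose vertices are the dominating sets of $G$ of cardinality at most $k$, with two such sets $A,B$ adjacent if and only if their symmetric difference $(A\setminus B)\cup(B\setminus A)$ consists of exactly one vertex of $G$. $X_k(G)$ is the graph whose vertices are the dominating sets of $G$ of cardinality exactly $k$, with two such sets $S,T$ adjacent if and only if there exist $s \in S$ and $t \in T$ with $T = (S\setminus\{s\})\cup\{t\}$ (and $S \neq T$). *)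

theory Defs
  imports Main
begin

definition simple_graph :: "'a set \<Rightarrow> ('a \<Rightarrow> 'a \<Rightarrow> bool) \<Rightarrow> bool" where
  "simple_graph V E \<longleftrightarrow> finite V \<and> (\<forall>x y. E x y \<longrightarrow> x \<in> V \<and> y \<in> V)
     \<and> (\<forall>x y. E x y \<longrightarrow> E y x) \<and> (\<forall>x. \<not> E x x)"

definition dominating_set :: "'a set \<Rightarrow> ('a \<Rightarrow> 'a \<Rightarrow> bool) \<Rightarrow> 'a set \<Rightarrow> bool" where
  "dominating_set V E S \<longleftrightarrow> S \<subseteq> V \<and> (\<forall>v \<in> V - S. \<exists>u \<in> S. E v u)"

definition domination_number :: "'a set \<Rightarrow> ('a \<Rightarrow> 'a \<Rightarrow> bool) \<Rightarrow> nat" where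
  "domination_number V E = Min (card ` {S. dominating_set V E S})"

definition Dk_verts :: "'a set \<Rightarrow> ('a \<Rightarrow> 'a \<Rightarrow> bool) \<Rightarrow> nat \<Rightarrow> 'a set set" where
  "Dk_verts V E k = {S. dominating_set V E S \<and> card S \<le> k}"

definition Dk_adj :: "'a set \<Rightarrow> 'a set \<Rightarrow> bool" where
  "Dk_adj A B \<longleftrightarrow> (\<exists>v. (A - B) \<union> (B - A) = {v})"

definition Xk_verts :: "'a set \<Rightarrow> ('a \<Rightarrow> 'a \<Rightarrow> bool) \<Rightarrow> nat \<Rightarrow> 'a set set" where
  "Xk_verts V E k = {S. dominating_set V E S \<and> card S = k}"

definition Xk_adj :: "'a set \<Rightarrow> 'a set \<Rightarrow> bool" where
  "Xk_adj S T \<longleftrightarrow> S \<noteq> T \<and> (\<exists>s \<in> S. \<exists>t \<in> T. T = (S - {s}) \<union> {t})"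

definition joined_by_path :: "'b set \<Rightarrow> ('b \<Rightarrow> 'b \<Rightarrow> bool) \<Rightarrow> 'b \<Rightarrow> 'b \<Rightarrow> bool" where
  "joined_by_path Vs Adj x y \<longleftrightarrow> x \<in> Vs \<and> y \<in> Vs \<and>
     (x, y) \<in> {(a, b). a \<in> Vs \<and> b \<in> Vs \<and> Adj a b}\<^sup>*"

end

theory Submission
  imports Defs
begin

(* Let A and B be dominating k-sets.
   (X => D) An exchange step S -> (S - {s}) + {t} of X_k(G) is simulated in D_{k+1}(G) by the
   two steps S -> S + {t} -> (S - {s}) + {t}; the middle set is a dominating (k+1)-set.
   (D => X) Walk along a path A = D_0, D_1, ..., D_m = B in D_{k+1}(G) and maintain the
   invariant: every dominating k-set T comparable (under inclusion) with D_i lies in the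
   X_k(G)-component of A.  It holds for D_0 = A, since the only dominating k-set comparable
   with A is A itself.  When D_i changes by adding or removing one vertex, every k-set T
   comparable with D_{i+1} is either comparable with D_i or one exchange step away from a
   dominating k-set T' comparable with D_i (lemmas comparable_after_insert/remove).  For
   D_m = B, taking T = B gives the claim. *)

lemma joined_by_path_refl: "x \<in> Vs \<Longrightarrow> joined_by_path Vs Adj x x"
  unfolding joined_by_path_def by blast

lemma joined_by_path_snoc:
  assumes "joined_by_path Vs Adj x y" "z \<in> Vs" "Adj y z"
  shows "joined_by_path Vs Adj x z"
  using assms unfolding joined_by_path_def by (blast intro: rtrancl_into_rtrancl)

lemma joined_by_path_trans:
  "joined_by_path Vs Adj x y \<Longrightarrow> joined_by_path Vs Adj y z \<Longrightarrow> joined_by_path Vs Adj x z"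
  unfolding joined_by_path_def by (blast intro: rtrancl_trans)

lemma joined_by_path_induct [consumes 1, case_names base step]:
  assumes path: "joined_by_path Vs Adj x y"
    and P_base: "P x"
    and P_step: "\<And>y z. joined_by_path Vs Adj x y \<Longrightarrow> z \<in> Vs \<Longrightarrow> Adj y z \<Longrightarrow> P y \<Longrightarrow> P z"
  shows "P y"
proof -
  have x: "x \<in> Vs" using path unfolding joined_by_path_def by simp
  have "(x, y) \<in> {(a, b). a \<in> Vs \<and> b \<in> Vs \<and> Adj a b}\<^sup>*"
    using path unfolding joined_by_path_def by simp
  then have "joined_by_path Vs Adj x y \<and> P y"
  proof (induction rule: rtrancl_induct)
    case base
    show ?case using x P_base by (simp add: joined_by_path_refl)
  next
    case (step y z)
    then have "joined_by_path Vs Adj x z" "z \<in> Vs" "Adj y z"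
      using joined_by_path_snoc by auto
    then show ?case using step.IH P_step by blast
  qed
  then show ?thesis by blast
qed

lemma joined_by_path_simulate:
  assumes path: "joined_by_path Vs Adj x y"
    and edges: "\<And>a b. a \<in> Vs \<Longrightarrow> b \<in> Vs \<Longrightarrow> Adj a b \<Longrightarrow> joined_by_path Ws Adj' a b"
    and sub: "Vs \<subseteq> Ws"
  shows "joined_by_path Ws Adj' x y"
  using path
proof (induction rule: joined_by_path_induct)
  case base
  then show ?case using path sub by (auto simp: joined_by_path_def)
next
  case (step y z)
  then have "y \<in> Vs" by (simp add: joined_by_path_def)
  with step show ?case using edges joined_by_path_trans by metis
qed

lemma dominating_set_finite: "finite V \<Longrightarrow> dominating_set V E S \<Longrightarrow> finite S"
  unfolding dominating_set_def by (blast intro: finite_subset)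

lemma dominating_set_superset:
  "dominating_set V E S \<Longrightarrow> S \<subseteq> T \<Longrightarrow> T \<subseteq> V \<Longrightarrow> dominating_set V E T"
  unfolding dominating_set_def by blast

lemma Dk_adj_cases:
  assumes "Dk_adj D D'"
  obtains v where "v \<notin> D" "D' = insert v D" | v where "v \<in> D" "D' = D - {v}"
proof -
  from assms obtain v where v: "(D - D') \<union> (D' - D) = {v}" unfolding Dk_adj_def by blast
  have "D' = (if v \<in> D then D - {v} else insert v D)"
  proof (rule set_eqI)
    fix x
    have "x \<in> D - D' \<or> x \<in> D' - D \<longleftrightarrow> x = v" using v by blast
    then show "x \<in> D' \<longleftrightarrow> x \<in> (if v \<in> D then D - {v} else insert v D)"
      by (cases "v \<in> D") auto
  qed
  then show ?thesis using that by (cases "v \<in> D") auto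
qed

lemma Dk_adj_insert: "v \<notin> D \<Longrightarrow> Dk_adj D (insert v D)"
  unfolding Dk_adj_def by blast

lemma Dk_adj_exchange: "t \<notin> S \<Longrightarrow> s \<in> S \<Longrightarrow> Dk_adj (insert t S) (insert t (S - {s}))"
  unfolding Dk_adj_def by (rule exI[of _ s]) auto

lemma Xk_adj_exchange:
  assumes "Xk_adj S T" "finite S" "card S = card T"
  obtains s t where "s \<in> S" "t \<notin> S" "T = insert t (S - {s})"
proof -
  from assms(1) obtain s t where st: "s \<in> S" "S \<noteq> T" "T = insert t (S - {s})"
    unfolding Xk_adj_def by auto
  have "t \<notin> S"
  proof
    assume "t \<in> S"
    then have "T \<subseteq> S" using st by blast
    then show False using st assms(2,3) card_subset_eq by metis
  qed
  with st show ?thesis using that by blast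
qed

section \<open>Paths in X_k(G) give paths in D_{k+1}(G)\<close>

lemma Xk_step_in_Dk:
  assumes "finite V" "S \<in> Xk_verts V E k" "T \<in> Xk_verts V E k" "Xk_adj S T"
  shows "joined_by_path (Dk_verts V E (k + 1)) Dk_adj S T"
proof -
  have S: "dominating_set V E S" "card S = k" and T: "dominating_set V E T" "card T = k"
    using assms(2,3) unfolding Xk_verts_def by auto
  have finS: "finite S" using dominating_set_finite assms(1) S(1) .
  obtain s t where st: "s \<in> S" "t \<notin> S" "T = insert t (S - {s})"
    using Xk_adj_exchange[OF assms(4) finS] S(2) T(2) by metis
  have "insert t S \<subseteq> V" using S(1) T(1) st(3) unfolding dominating_set_def by blast
  then have "insert t S \<in> Dk_verts V E (k + 1)"
    using dominating_set_superset[OF S(1)] finS st(2) S(2) unfolding Dk_verts_def by auto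
  moreover have "S \<in> Dk_verts V E (k + 1)" "T \<in> Dk_verts V E (k + 1)"
    using S T unfolding Dk_verts_def by auto
  ultimately have "joined_by_path (Dk_verts V E (k + 1)) Dk_adj S (insert t S)"
    using Dk_adj_insert[OF st(2)] joined_by_path_refl joined_by_path_snoc by metis
  then show ?thesis
    using Dk_adj_exchange[OF st(2,1)] st(3) \<open>T \<in> Dk_verts V E (k + 1)\<close>
    by (simp add: joined_by_path_snoc)
qed

section \<open>Paths in D_{k+1}(G) give paths in X_k(G)\<close>

definition comparable :: "'a set \<Rightarrow> 'a set \<Rightarrow> bool" where
  "comparable S T \<longleftrightarrow> S \<subseteq> T \<or> T \<subseteq> S"

text \<open>Adding a vertex v to D: a dominating k-set comparable with D + {v} is comparable with D,
  or it is one exchange step away from D itself, which is then a dominating k-set.\<close>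
lemma comparable_after_insert:
  assumes fin: "finite D" "finite T"
    and v: "v \<notin> D" "card (insert v D) \<le> k + 1"
    and D: "dominating_set V E D"
    and T: "T \<in> Xk_verts V E k" "comparable T (insert v D)"
  shows "\<exists>T' \<in> Xk_verts V E k. comparable T' D \<and> (T' = T \<or> Xk_adj T' T)"
proof -
  have cardT: "card T = k" using T(1) unfolding Xk_verts_def by simp
  have cardD: "card D \<le> k" using v fin by simp
  consider "comparable T D" | "T \<subseteq> insert v D" "v \<in> T" "\<not> comparable T D"
    using T(2) unfolding comparable_def by blast
  then show ?thesis
  proof cases
    case 1
    then show ?thesis using T(1) by blast
  next
    case 2
    have "card D = k"
    proof (rule ccontr)
      assume "card D \<noteq> k"
      then have "card (insert v D) \<le> card T" using cardD cardT v(1) fin(1) by simp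
      then have "T = insert v D" using card_seteq[OF _ 2(1)] fin(1) by blast
      then show False using 2(3) unfolding comparable_def by blast
    qed
    then have DX: "D \<in> Xk_verts V E k" using D unfolding Xk_verts_def by simp
    have "\<not> D \<subseteq> T" using 2(3) unfolding comparable_def by blast
    then obtain u where u: "u \<in> D" "u \<notin> T" by blast
    have "card D > 0" using u fin(1) card_gt_0_iff by blast
    then have "card (insert v (D - {u})) = k"
      using u v(1) fin(1) \<open>card D = k\<close> by simp
    moreover have "T \<subseteq> insert v (D - {u})" using 2(1) u(2) by blast
    ultimately have "T = insert v (D - {u})"
      using card_subset_eq[of "insert v (D - {u})" T] fin(1) cardT by simp
    then have "Xk_adj D T" unfolding Xk_adj_def using u 2(2) v(1) by blast
    then show ?thesis using DX unfolding comparable_def by blast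
  qed
qed

text \<open>Removing a vertex v from D: a dominating k-set T comparable with D - {v} is comparable
  with D, or, after exchanging one of its vertices for v, becomes a dominating k-set T'
  containing D.\<close>
lemma comparable_after_remove:
  assumes finV: "finite V"
    and v: "v \<in> D" and D: "dominating_set V E D" "card D \<le> k + 1"
    and T: "T \<in> Xk_verts V E k" "comparable T (D - {v})"
  shows "\<exists>T' \<in> Xk_verts V E k. comparable T' D \<and> (T' = T \<or> Xk_adj T' T)"
proof -
  have domT: "dominating_set V E T" and cardT: "card T = k"
    using T(1) unfolding Xk_verts_def by auto
  have finD: "finite D" and finT: "finite T"
    using dominating_set_finite finV D(1) domT by auto
  consider "comparable T D" | "D - {v} \<subseteq> T" "v \<notin> T" "\<not> comparable T D"
    using T(2) unfolding comparable_def by blast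
  then show ?thesis
  proof cases
    case 1
    then show ?thesis using T(1) by blast
  next
    case 2
    have "card D \<noteq> k + 1"
    proof
      assume "card D = k + 1"
      then have "card (D - {v}) = card T" using v cardT finD by simp
      then have "T = D - {v}" using 2(1) finT card_subset_eq by blast
      then show False using 2(3) unfolding comparable_def by blast
    qed
    moreover have "card D > 0" using v finD card_gt_0_iff by blast
    ultimately have "card (D - {v}) < card T" using D(2) v finD cardT by simp
    then have "\<not> T \<subseteq> D - {v}" using finD card_mono by (metis finite_Diff leD)
    then obtain w where w: "w \<in> T" "w \<notin> D - {v}" by blast
    define T' where "T' = insert v (T - {w})"
    have "D \<subseteq> T'" using 2(1,2) w unfolding T'_def by blast
    moreover have "T' \<subseteq> V" using v D(1) domT unfolding T'_def dominating_set_def by blast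
    ultimately have "dominating_set V E T'" using dominating_set_superset D(1) by blast
    moreover have "card T' = k"
    proof -
      have "card T > 0" using w(1) finT card_gt_0_iff by blast
      then show ?thesis using w(1) 2(2) finT cardT unfolding T'_def by simp
    qed
    ultimately have T'X: "T' \<in> Xk_verts V E k" unfolding Xk_verts_def by blast
    have "T = (T' - {v}) \<union> {w}" "T' \<noteq> T" "v \<in> T'"
      using w(1) 2(2) unfolding T'_def by auto
    then have "Xk_adj T' T" unfolding Xk_adj_def using w(1) by blast
    then show ?thesis using T'X \<open>D \<subseteq> T'\<close> unfolding comparable_def by blast
  qed
qed

lemma comparable_after_Dk_step:
  assumes "finite V" "D \<in> Dk_verts V E (k + 1)" "D' \<in> Dk_verts V E (k + 1)" "Dk_adj D D'"
    and "T \<in> Xk_verts V E k" "comparable T D'"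
  shows "\<exists>T' \<in> Xk_verts V E k. comparable T' D \<and> (T' = T \<or> Xk_adj T' T)"
  using assms(4)
proof (cases rule: Dk_adj_cases)
  case (1 v)
  have D: "dominating_set V E D" "finite D" and D': "card (insert v D) \<le> k + 1"
    using assms(1-3) 1 dominating_set_finite unfolding Dk_verts_def by auto
  have "finite T" using assms(1,5) dominating_set_finite unfolding Xk_verts_def by auto
  then show ?thesis
    using comparable_after_insert[OF D(2) _ 1(1) D' D(1) assms(5)] assms(6)[unfolded 1(2)]
    by blast
next
  case (2 v)
  have "dominating_set V E D" "card D \<le> k + 1" using assms(2) unfolding Dk_verts_def by auto
  then show ?thesis
    using comparable_after_remove[OF assms(1) 2(1) _ _ assms(5)] assms(6)[unfolded 2(2)]
    by blast
qed

lemma Dk_path_invariant: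
  assumes finV: "finite V" and A: "A \<in> Xk_verts V E k"
    and path: "joined_by_path (Dk_verts V E (k + 1)) Dk_adj A D"
  shows "\<forall>T \<in> Xk_verts V E k. comparable T D \<longrightarrow> joined_by_path (Xk_verts V E k) Xk_adj A T"
  using path
proof (induction rule: joined_by_path_induct)
  case base
  show ?case
  proof (intro ballI impI)
    fix T assume T: "T \<in> Xk_verts V E k" "comparable T A"
    have "finite T" "finite A" "card T = card A"
      using T(1) A finV dominating_set_finite unfolding Xk_verts_def by auto
    then have "T = A"
      using T(2) card_subset_eq[of A T] card_subset_eq[of T A] unfolding comparable_def by auto
    then show "joined_by_path (Xk_verts V E k) Xk_adj A T" using joined_by_path_refl[OF A] by simp
  qed
next
  case (step D D')
  have "D \<in> Dk_verts V E (k + 1)" using step.hyps(1) by (simp add: joined_by_path_def)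
  show ?case
  proof (intro ballI impI)
    fix T assume "T \<in> Xk_verts V E k" "comparable T D'"
    then obtain T' where "T' \<in> Xk_verts V E k" "comparable T' D" "T' = T \<or> Xk_adj T' T"
      using comparable_after_Dk_step[OF finV \<open>D \<in> _\<close> step.hyps(2,3)] by blast
    moreover have "joined_by_path (Xk_verts V E k) Xk_adj A T'"
      using step.IH \<open>T' \<in> _\<close> \<open>comparable T' D\<close> by blast
    ultimately show "joined_by_path (Xk_verts V E k) Xk_adj A T"
      using joined_by_path_snoc[of _ _ A T' T] \<open>T \<in> _\<close> by blast
  qed
qed

theorem lemma11:
  fixes V :: "'a set" and E :: "'a \<Rightarrow> 'a \<Rightarrow> bool" and k :: nat and A B :: "'a set"
  assumes "simple_graph V E"
    and "k \<ge> domination_number V E"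
    and "dominating_set V E A" and "dominating_set V E B"
    and "card A = k" and "card B = k"
  shows "joined_by_path (Dk_verts V E (k + 1)) Dk_adj A B \<longleftrightarrow>
         joined_by_path (Xk_verts V E k) Xk_adj A B"
proof
  have finV: "finite V" using assms(1) unfolding simple_graph_def by blast
  have AX: "A \<in> Xk_verts V E k" and BX: "B \<in> Xk_verts V E k"
    using assms(3-6) unfolding Xk_verts_def by auto
  {
    assume "joined_by_path (Dk_verts V E (k + 1)) Dk_adj A B"
    moreover have "comparable B B" unfolding comparable_def by simp
    ultimately show "joined_by_path (Xk_verts V E k) Xk_adj A B"
      using Dk_path_invariant[OF finV AX] BX by blast
  }
  {
    assume X_path: "joined_by_path (Xk_verts V E k) Xk_adj A B"
    have "Xk_verts V E k \<subseteq> Dk_verts V E (k + 1)"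
      unfolding Xk_verts_def Dk_verts_def by auto
    then show "joined_by_path (Dk_verts V E (k + 1)) Dk_adj A B"
      using joined_by_path_simulate[OF X_path Xk_step_in_Dk[OF finV]] by blast
  }
qed

end
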